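(* Let $G$, $\mathcal Q_\delta$, $\mathcal T_{\mathcal X}$ and BQ-CADMM be as in the context, with arbitrary $a\in\mathbb R$, $\Delta>0$, $\delta\in(0,\Delta)$, $\rho>0$ and arbitrary data $r_1,\dots,r_n\in\mathbb R$. Let $\bar r=\frac1n\sum_{i=1}^n r_i$. Then there exists a finite $k_0$ such that for all $k\ge k_0$ exactly one of the following holds: (i) (convergence) $\mathcal Q_\delta(x_1^k)=\mathcal Q_\delta(x_2^k)=\cdots=\mathcal Q_\delta(x_n^k)=x_Q^*$ for a common value $x_Q^*\in\{a,a+\Delta\}$ independent of $k$, and $$|x_Q^*-\mathcal T_{\mathcal X}(\bar r)|\le \Big(1+4\rho\tfrac{m}{n}\Big)(\Delta-\delta)\ \text{ if } x_Q^*=a,\qquad |x_Q^*-\mathcal T_{\mathcal X}(\bar r)|<\Big(1+4\rho\tfrac{m}{n}\Big)\delta\ \text{ if } x_Q^*=a+\Delta;$$ (ii) (cycling) there is a finite period $T\ge2$ with $x_i^k=x_i^{k+T}$ for all $i=1,\dots,n$, such that $$\sum_{l=0}^{T-1}\mathcal Q_\delta(x_1^{k+l})=\sum_{l=0}^{T-1}\mathcal Q_\delta(x_2^{k+l})=\cdots=\sum_{l=0}^{T-1}\mathcal Q_\delta(x_n^{k+l}),$$ and moreover $|\bar r-(a+\Delta-\delta)|<6\rho n\Delta$.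
   Context: Let $G$ be a connected undirected simple graph on nodes $\{1,\dots,n\}$, $n\ge2$, with $m$ edges; $\mathcal N_i$ is the set of neighbors of node $i$ (with $i\notin\mathcal N_i$), so $\sum_i|\mathcal N_i|=2m$. Given $a\in\mathbb R$, $\Delta>0$ and $\delta\in(0,\Delta)$, the $\delta$-quantizer is $\mathcal Q_\delta(x)=a$ if $x\le a+\Delta-\delta$ and $\mathcal Q_\delta(x)=a+\Delta$ otherwise; $\mathcal X=[a,a+\Delta]$ and $\mathcal T_{\mathcal X}:\mathbb R\to\mathcal X$ is the projection onto $\mathcal X$ (nearest point). Given local data $r_1,\dots,r_n\in\mathbb R$ and a parameter $\rho>0$, BQ-CADMM is the deterministic iteration with $x_i^0=0$, $\alpha_i^0=0$ for all $i$ and, for $k\ge0$, $$x_i^{k+1}=\frac{1}{1+2\rho|\mathcal N_i|}\Big(\rho|\mathcal N_i|\mathcal Q_\delta(x_i^k)+\rho\sum_{j\in\mathcal N_i}\mathcal Q_\delta(x_j^k)-\alpha_i^k+r_i\Big),$$ $$\alpha_i^{k+1}=\alpha_i^k+\rho\Big(|\mathcal N_i|\mathcal Q_\delta(x_i^{k+1})-\sum_{j\in\mathcal N_i}\mathcal Q_\delta(x_j^{k+1})\Big).$$ *)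

theory Defs
  imports Complex_Main
begin

definition nodes :: "nat \<Rightarrow> nat set" where
  "nodes n = {1..n}"

definition simple_connected_graph :: "nat \<Rightarrow> (nat \<Rightarrow> nat \<Rightarrow> bool) \<Rightarrow> bool" where
  "simple_connected_graph n E \<longleftrightarrow>
     (\<forall>i j. E i j \<longrightarrow> i \<in> nodes n \<and> j \<in> nodes n) \<and>
     (\<forall>i j. E i j \<longrightarrow> E j i) \<and>
     (\<forall>i. \<not> E i i) \<and>
     (\<forall>i\<in>nodes n. \<forall>j\<in>nodes n. E\<^sup>*\<^sup>* i j)"

definition nbrs :: "nat \<Rightarrow> (nat \<Rightarrow> nat \<Rightarrow> bool) \<Rightarrow> nat \<Rightarrow> nat set" where
  "nbrs n E i = {j \<in> nodes n. E i j}"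

definition num_edges :: "nat \<Rightarrow> (nat \<Rightarrow> nat \<Rightarrow> bool) \<Rightarrow> nat" where
  "num_edges n E = card {(i, j). i \<in> nodes n \<and> j \<in> nodes n \<and> i < j \<and> E i j}"

definition quant :: "real \<Rightarrow> real \<Rightarrow> real \<Rightarrow> real \<Rightarrow> real" where
  "quant a \<Delta> \<delta> x = (if x \<le> a + \<Delta> - \<delta> then a else a + \<Delta>)"

definition proj :: "real \<Rightarrow> real \<Rightarrow> real \<Rightarrow> real" where
  "proj a \<Delta> x = max a (min (a + \<Delta>) x)"

primrec bq_cadmm :: "real \<Rightarrow> real \<Rightarrow> real \<Rightarrow> real \<Rightarrow> nat \<Rightarrow> (nat \<Rightarrow> nat \<Rightarrow> bool)
    \<Rightarrow> (nat \<Rightarrow> real) \<Rightarrow> nat \<Rightarrow> (nat \<Rightarrow> real) \<times> (nat \<Rightarrow> real)" where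
  "bq_cadmm a \<Delta> \<delta> \<rho> n E r 0 = (\<lambda>_. 0, \<lambda>_. 0)"
| "bq_cadmm a \<Delta> \<delta> \<rho> n E r (Suc k) =
     (let x = fst (bq_cadmm a \<Delta> \<delta> \<rho> n E r k);
          \<alpha> = snd (bq_cadmm a \<Delta> \<delta> \<rho> n E r k);
          Q = quant a \<Delta> \<delta>;
          x' = (\<lambda>i. (\<rho> * real (card (nbrs n E i)) * Q (x i)
                      + \<rho> * (\<Sum>j\<in>nbrs n E i. Q (x j)) - \<alpha> i + r i)
                     / (1 + 2 * \<rho> * real (card (nbrs n E i))));
          \<alpha>' = (\<lambda>i. \<alpha> i + \<rho> * (real (card (nbrs n E i)) * Q (x' i)
                      - (\<Sum>j\<in>nbrs n E i. Q (x' j))))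
      in (x', \<alpha>'))"

definition xk :: "real \<Rightarrow> real \<Rightarrow> real \<Rightarrow> real \<Rightarrow> nat \<Rightarrow> (nat \<Rightarrow> nat \<Rightarrow> bool)
    \<Rightarrow> (nat \<Rightarrow> real) \<Rightarrow> nat \<Rightarrow> nat \<Rightarrow> real" where
  "xk a \<Delta> \<delta> \<rho> n E r k i = fst (bq_cadmm a \<Delta> \<delta> \<rho> n E r k) i"

end

theory Submission
  imports Defs "HOL-Library.FuncSet"
begin

text \<open>The duals \<open>\<alpha>\<^sup>k\<close> live on the lattice \<open>\<rho>\<Delta>\<int>\<close> and stay bounded, since a dual that drifts below
  \<open>\<alpha>_low i\<close> or above \<open>\<alpha>_high i\<close> forces the next quantized value and is pushed back. So the
  pair \<open>(Q(x\<^sup>k), \<alpha>\<^sup>k)\<close>, which determines all later iterates, takes finitely many values and the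
  iteration is eventually periodic. Over a period the duals return, so the period sums of
  \<open>Q(x\<^sub>i)\<close> lie in the kernel of the graph Laplacian and agree at all nodes. If one node is
  constant over the period then so are all, and summing the x-update (where \<open>\<Sum>\<^sub>i \<alpha>\<^sub>i = 0\<close>)
  compares \<open>x\<^sub>Q\<^sup>*\<close> with \<open>rbar\<close>. Otherwise every node takes both values, which pins each dual
  near \<open>[\<alpha>_low i, \<alpha>_high i]\<close>; summing against \<open>\<Sum>\<^sub>i \<alpha>\<^sub>i = 0\<close> locates \<open>rbar\<close> near the
  threshold \<open>a + \<Delta> - \<delta>\<close>. A period of the state is doubled to guarantee \<open>T \<ge> 2\<close>.\<close>

lemma finite_nodes [simp]: "finite (nodes n)"
  by (simp add: nodes_def)

lemma card_nodes [simp]: "card (nodes n) = n"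
  by (simp add: nodes_def)

lemma nbrs_subset_nodes: "nbrs n E i \<subseteq> nodes n"
  by (auto simp: nbrs_def)

lemma finite_nbrs [simp]: "finite (nbrs n E i)"
  using finite_subset[OF nbrs_subset_nodes] by simp

lemma sum_nbrs_swap:
  fixes v :: "nat \<Rightarrow> 'a::comm_semiring_1"
  assumes "symp E"
  shows "(\<Sum>i\<in>nodes n. \<Sum>j\<in>nbrs n E i. v j) = (\<Sum>i\<in>nodes n. of_nat (card (nbrs n E i)) * v i)"
proof -
  have "(\<Sum>i\<in>nodes n. \<Sum>j\<in>nbrs n E i. v j) = (\<Sum>i\<in>nodes n. \<Sum>j\<in>nodes n. if E i j then v j else 0)"
    by (rule sum.cong) (auto simp: nbrs_def sum.If_cases Int_def)
  also have "\<dots> = (\<Sum>j\<in>nodes n. \<Sum>i\<in>nodes n. if E i j then v j else 0)"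
    by (rule sum.swap)
  also have "\<dots> = (\<Sum>j\<in>nodes n. of_nat (card (nbrs n E j)) * v j)"
  proof (rule sum.cong)
    fix j
    have "{i \<in> nodes n. E i j} = nbrs n E j"
      using assms by (auto simp: nbrs_def symp_def)
    then show "(\<Sum>i\<in>nodes n. if E i j then v j else 0) = of_nat (card (nbrs n E j)) * v j"
      by (simp add: sum.If_cases Int_def)
  qed simp
  finally show ?thesis .
qed

lemma sum_laplacian_eq_0:
  fixes v :: "nat \<Rightarrow> 'a::comm_ring_1"
  assumes "symp E"
  shows "(\<Sum>i\<in>nodes n. of_nat (card (nbrs n E i)) * v i - (\<Sum>j\<in>nbrs n E i. v j)) = 0"
  by (simp add: sum_subtractf sum_nbrs_swap[OF assms])

lemma sum_card_nbrs:
  assumes "symp E" and "irreflp E"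
  shows "(\<Sum>i\<in>nodes n. card (nbrs n E i)) = 2 * num_edges n E"
proof -
  let ?up = "{(i, j). i \<in> nodes n \<and> j \<in> nodes n \<and> i < j \<and> E i j}"
  let ?down = "{(i, j). i \<in> nodes n \<and> j \<in> nodes n \<and> j < i \<and> E i j}"
  have "i < j \<or> j < i" if "E i j" for i j
    using assms(2) that by (cases i j rule: linorder_cases) (auto simp: irreflp_def)
  then have "Sigma (nodes n) (nbrs n E) = ?up \<union> ?down"
    by (auto simp: nbrs_def) blast
  moreover have "?down = prod.swap ` ?up"
    using sympD[OF assms(1)] by (fastforce simp: image_iff)
  moreover have "finite ?up"
    by (rule finite_subset[of _ "nodes n \<times> nodes n"]) auto
  moreover have "?up \<inter> prod.swap ` ?up = {}"
    by auto
  ultimately have "card (Sigma (nodes n) (nbrs n E)) = 2 * card ?up"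
    by (simp add: card_Un_disjoint card_image)
  then show ?thesis
    by (simp add: num_edges_def)
qed

lemma laplacian_kernel_constant:
  fixes v :: "nat \<Rightarrow> real"
  assumes G: "simple_connected_graph n E"
    and harmonic: "\<And>i. i \<in> nodes n \<Longrightarrow> real (card (nbrs n E i)) * v i = (\<Sum>j\<in>nbrs n E i. v j)"
    and "i \<in> nodes n" "j \<in> nodes n"
  shows "v i = v j"
proof -
  define M where "M = Max (v ` nodes n)"
  have le_M: "v k \<le> M" if "k \<in> nodes n" for k
    using that by (simp add: M_def)
  have "M \<in> v ` nodes n"
    unfolding M_def using \<open>i \<in> nodes n\<close> by (intro Max_in) auto
  then obtain i0 where i0: "i0 \<in> nodes n" "v i0 = M"
    by blast
  have edge: "v l = M" if "v k = M" "k \<in> nodes n" "E k l" for k l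
  proof -
    have "l \<in> nbrs n E k"
      using that G by (auto simp: nbrs_def simple_connected_graph_def)
    moreover have "(\<Sum>j\<in>nbrs n E k. v k - v j) = 0"
      using harmonic[OF that(2)] by (simp add: sum_subtractf)
    moreover have "\<forall>j\<in>nbrs n E k. 0 \<le> v k - v j"
      using that(1) le_M nbrs_subset_nodes by fastforce
    ultimately show ?thesis
      using that(1) sum_nonneg_eq_0_iff[of "nbrs n E k" "\<lambda>j. v k - v j"] by auto
  qed
  have "v k = M" if "k \<in> nodes n" for k
  proof -
    have "E\<^sup>*\<^sup>* i0 k"
      using G i0 that by (auto simp: simple_connected_graph_def)
    then show ?thesis
    proof (induction rule: rtranclp_induct)
      case (step y z)
      then have "y \<in> nodes n"
        using G by (auto simp: simple_connected_graph_def)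
      with step show ?case
        using edge by blast
    qed (use i0 in simp)
  qed
  then show ?thesis
    using assms(3,4) by simp
qed

lemma periodic_add_mult:
  fixes s :: "nat \<Rightarrow> 'a"
  assumes "\<And>k. k0 \<le> k \<Longrightarrow> s (k + T) = s k" and "k0 \<le> k"
  shows "s (k + c * T) = s k"
proof (induction c)
  case (Suc c)
  have "s (k + Suc c * T) = s (k + c * T + T)"
    by (simp add: algebra_simps)
  also have "\<dots> = s (k + c * T)"
    using assms by simp
  finally show ?case
    using Suc.IH by simp
qed simp

lemma periodic_mod:
  fixes s :: "nat \<Rightarrow> 'a"
  assumes "\<And>k. k0 \<le> k \<Longrightarrow> s (k + T) = s k" and "k0 \<le> k"
  shows "s k = s (k0 + (k - k0) mod T)"
proof -
  have "k = k0 + (k - k0) mod T + (k - k0) div T * T"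
    using assms(2) mod_div_mult_eq[of "k - k0" T] by linarith
  then show ?thesis
    using periodic_add_mult[where s = s, OF assms(1), where k = "k0 + (k - k0) mod T" and c = "(k - k0) div T"]
    by simp
qed

lemma eventually_periodic:
  fixes s :: "nat \<Rightarrow> 'a"
  assumes "finite (range s)" and step: "\<And>k l. s k = s l \<Longrightarrow> s (Suc k) = s (Suc l)"
  obtains k0 T where "0 < T" and "\<And>k. k0 \<le> k \<Longrightarrow> s (k + T) = s k"
proof -
  have "\<not> inj s"
  proof
    assume "inj s"
    then have "finite (UNIV :: nat set)"
      using assms(1) finite_imageD by blast
    then show False
      by simp
  qed
  then obtain k l where "s k = s l" "k \<noteq> l"
    unfolding inj_def by blast
  then obtain k1 k2 where same: "s k1 = s k2" and "k1 < k2"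
    by (metis linorder_neqE_nat)
  have shift: "s (k1 + j) = s (k2 + j)" for j
  proof (induction j)
    case (Suc j)
    then show ?case
      using step[of "k1 + j" "k2 + j"] by simp
  qed (simp add: same)
  show ?thesis
  proof (rule that)
    show "0 < k2 - k1"
      using \<open>k1 < k2\<close> by simp
    fix k assume "k1 \<le> k"
    then show "s (k + (k2 - k1)) = s k"
      using shift[of "k - k1"] \<open>k1 < k2\<close> by (simp add: add.commute)
  qed
qed

lemma sum_eq_const_imp_eq:
  fixes g :: "'a \<Rightarrow> 'b::ordered_cancel_comm_monoid_add"
  assumes "finite A" and "(\<forall>l\<in>A. g l \<le> c) \<or> (\<forall>l\<in>A. c \<le> g l)"
    and "sum g A = (\<Sum>l\<in>A. c)" and "l \<in> A"
  shows "g l = c"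
proof (rule ccontr)
  assume "g l \<noteq> c"
  then have "sum g A < (\<Sum>l\<in>A. c) \<or> (\<Sum>l\<in>A. c) < sum g A"
    using assms by (metis (no_types, lifting) order_less_le sum_strict_mono_ex1)
  then show False
    using assms(3) by simp
qed

lemma abs_le_of_min_max_bounds:
  fixes y :: "'a::linordered_idom"
  shows "min 0 u - t \<le> y \<Longrightarrow> y \<le> max 0 w + t \<Longrightarrow> 0 \<le> t \<Longrightarrow> \<bar>y\<bar> \<le> \<bar>u\<bar> + \<bar>w\<bar> + t"
  by (auto simp: abs_le_iff min_def max_def split: if_splits)

lemma quant_cases: "quant a \<Delta> \<delta> y = a \<or> quant a \<Delta> \<delta> y = a + \<Delta>"
  by (simp add: quant_def)

lemma quant_eq_low_iff: "0 < \<Delta> \<Longrightarrow> quant a \<Delta> \<delta> y = a \<longleftrightarrow> y \<le> a + \<Delta> - \<delta>"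
  by (simp add: quant_def)

lemma quant_eq_high_iff: "0 < \<Delta> \<Longrightarrow> quant a \<Delta> \<delta> y = a + \<Delta> \<longleftrightarrow> a + \<Delta> - \<delta> < y"
  by (auto simp: quant_def)

lemma quant_ge: "0 < \<Delta> \<Longrightarrow> a \<le> quant a \<Delta> \<delta> y"
  by (simp add: quant_def)

lemma quant_le: "0 < \<Delta> \<Longrightarrow> quant a \<Delta> \<delta> y \<le> a + \<Delta>"
  by (simp add: quant_def)

lemma dist_low_proj: "0 < \<Delta> \<Longrightarrow> \<bar>a - proj a \<Delta> y\<bar> \<le> max 0 (y - a)"
  by (auto simp: proj_def max_def min_def)

lemma dist_high_proj: "0 < \<Delta> \<Longrightarrow> \<bar>a + \<Delta> - proj a \<Delta> y\<bar> \<le> max 0 (a + \<Delta> - y)"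
  by (auto simp: proj_def max_def min_def)

declare bq_cadmm.simps(2) [simp del]

locale bq_cadmm_run =
  fixes n :: nat and E :: "nat \<Rightarrow> nat \<Rightarrow> bool" and a \<Delta> \<delta> \<rho> :: real and r :: "nat \<Rightarrow> real"
  assumes two_le_n: "2 \<le> n"
    and graph: "simple_connected_graph n E"
    and \<Delta>_pos: "0 < \<Delta>" and \<delta>_pos: "0 < \<delta>" and \<delta>_less_\<Delta>: "\<delta> < \<Delta>" and \<rho>_pos: "0 < \<rho>"
begin

abbreviation "V \<equiv> nodes n"
abbreviation "N i \<equiv> nbrs n E i"
abbreviation "deg i \<equiv> real (card (N i))"
abbreviation "thr \<equiv> a + \<Delta> - \<delta>"
abbreviation "x \<equiv> xk a \<Delta> \<delta> \<rho> n E r"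
abbreviation "\<alpha> k \<equiv> snd (bq_cadmm a \<Delta> \<delta> \<rho> n E r k)"
abbreviation "q k i \<equiv> quant a \<Delta> \<delta> (x k i)"
abbreviation "rbar \<equiv> (\<Sum>i\<in>V. r i) / real n"
abbreviation "m \<equiv> num_edges n E"

lemma symp_E: "symp E"
  using graph by (simp add: simple_connected_graph_def symp_def)

lemma irreflp_E: "irreflp E"
  using graph by (simp add: simple_connected_graph_def irreflp_def)

lemma deg_le_n: "deg i \<le> real n"
  using card_mono[OF finite_nodes nbrs_subset_nodes] by simp

lemma update_weight_pos: "0 < 1 + 2 * \<rho> * deg i"
  using \<rho>_pos by (simp add: add_pos_nonneg)

lemma x_Suc:
  "(1 + 2 * \<rho> * deg i) * x (Suc k) i = \<rho> * deg i * q k i + \<rho> * (\<Sum>j\<in>N i. q k j) - \<alpha> k i + r i"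
  using update_weight_pos[of i] by (simp add: xk_def Let_def bq_cadmm.simps)

lemma \<alpha>_Suc: "\<alpha> (Suc k) i = \<alpha> k i + \<rho> * (deg i * q (Suc k) i - (\<Sum>j\<in>N i. q (Suc k) j))"
  by (simp add: xk_def Let_def bq_cadmm.simps)

lemma sum_quant_nbrs_ge: "deg i * a \<le> (\<Sum>j\<in>N i. quant a \<Delta> \<delta> (f j))"
  using sum_bounded_below[of "N i" a] quant_ge[OF \<Delta>_pos] by simp

lemma sum_quant_nbrs_le: "(\<Sum>j\<in>N i. quant a \<Delta> \<delta> (f j)) \<le> deg i * (a + \<Delta>)"
  using sum_bounded_above[of "N i" _ "a + \<Delta>"] quant_le[OF \<Delta>_pos] by simp

lemma sum_deg: "(\<Sum>i\<in>V. deg i) = 2 * real m"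
  using sum_card_nbrs[OF symp_E irreflp_E] by (metis of_nat_mult of_nat_numeral of_nat_sum)

lemma sum_deg_le: "(\<Sum>i\<in>V. deg i) \<le> real n * real n"
  using sum_bounded_above[of V deg "real n"] deg_le_n by simp

lemma sum_\<alpha>_eq_0: "(\<Sum>i\<in>V. \<alpha> k i) = 0"
proof (induction k)
  case (Suc k)
  have "(\<Sum>i\<in>V. \<alpha> (Suc k) i)
      = (\<Sum>i\<in>V. \<alpha> k i) + \<rho> * (\<Sum>i\<in>V. deg i * q (Suc k) i - (\<Sum>j\<in>N i. q (Suc k) j))"
    by (simp add: \<alpha>_Suc sum.distrib sum_distrib_left)
  then show ?case
    using Suc sum_laplacian_eq_0[OF symp_E, of n "q (Suc k)"] by simp
qed (simp add: bq_cadmm.simps)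

lemma sum_weighted_x_Suc:
  "(\<Sum>i\<in>V. (1 + 2 * \<rho> * deg i) * x (Suc k) i) = (\<Sum>i\<in>V. r i) + 2 * \<rho> * (\<Sum>i\<in>V. deg i * q k i)"
proof -
  have "(\<Sum>i\<in>V. (1 + 2 * \<rho> * deg i) * x (Suc k) i)
      = \<rho> * (\<Sum>i\<in>V. deg i * q k i) + \<rho> * (\<Sum>i\<in>V. \<Sum>j\<in>N i. q k j) - (\<Sum>i\<in>V. \<alpha> k i) + (\<Sum>i\<in>V. r i)"
    by (subst sum.cong[OF refl x_Suc]) (simp add: sum.distrib sum_subtractf sum_distrib_left mult.assoc)
  then show ?thesis
    using sum_\<alpha>_eq_0[of k] sum_nbrs_swap[OF symp_E, of "q k" n] by simp
qed

lemma \<alpha>_in_lattice: "\<exists>z::int. \<alpha> k i = \<rho> * \<Delta> * of_int z"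
proof (induction k)
  case 0
  show ?case
    by (rule exI[of _ 0]) (simp add: bq_cadmm.simps)
next
  case (Suc k)
  then obtain z where z: "\<alpha> k i = \<rho> * \<Delta> * of_int z"
    by blast
  define b where "b j = (if x (Suc k) j \<le> thr then 0 else 1 :: int)" for j
  have q_b: "q (Suc k) j = a + \<Delta> * of_int (b j)" for j
    by (simp add: quant_def b_def)
  have "deg i * q (Suc k) i - (\<Sum>j\<in>N i. q (Suc k) j)
      = \<Delta> * of_int (int (card (N i)) * b i - (\<Sum>j\<in>N i. b j))"
    by (simp add: q_b sum.distrib algebra_simps sum_distrib_left)
  then have "\<alpha> (Suc k) i = \<rho> * \<Delta> * of_int z + \<rho> * (\<Delta> * of_int (int (card (N i)) * b i - (\<Sum>j\<in>N i. b j)))"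
    by (simp only: \<alpha>_Suc z)
  then have "\<alpha> (Suc k) i = \<rho> * \<Delta> * of_int (z + int (card (N i)) * b i - (\<Sum>j\<in>N i. b j))"
    by (simp add: algebra_simps)
  then show ?case
    by blast
qed

text \<open>The dual levels at which the x-update forces node i's next quantized value:
  below \<open>\<alpha>_low i\<close> it must be \<open>a + \<Delta>\<close>, above \<open>\<alpha>_high i\<close> it must be \<open>a\<close>.\<close>

abbreviation "\<alpha>_low i \<equiv> r i + 2 * \<rho> * deg i * a - (1 + 2 * \<rho> * deg i) * thr"
abbreviation "\<alpha>_high i \<equiv> r i + 2 * \<rho> * deg i * (a + \<Delta>) - (1 + 2 * \<rho> * deg i) * thr"

lemma \<alpha>_low_le_if_next_low:
  assumes "q (Suc k) i = a"
  shows "\<alpha>_low i \<le> \<alpha> k i"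
proof -
  have "(1 + 2 * \<rho> * deg i) * x (Suc k) i \<le> (1 + 2 * \<rho> * deg i) * thr"
    using assms quant_eq_low_iff[OF \<Delta>_pos] update_weight_pos[of i] by simp
  moreover have "\<rho> * deg i * a \<le> \<rho> * deg i * q k i"
    using \<rho>_pos quant_ge[OF \<Delta>_pos] by (intro mult_left_mono) auto
  moreover have "\<rho> * (deg i * a) \<le> \<rho> * (\<Sum>j\<in>N i. q k j)"
    using \<rho>_pos sum_quant_nbrs_ge by (intro mult_left_mono) auto
  ultimately show ?thesis
    unfolding x_Suc by (simp add: algebra_simps)
qed

lemma \<alpha>_less_high_if_next_high:
  assumes "q (Suc k) i = a + \<Delta>"
  shows "\<alpha> k i < \<alpha>_high i"
proof -
  have "(1 + 2 * \<rho> * deg i) * thr < (1 + 2 * \<rho> * deg i) * x (Suc k) i"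
    using assms quant_eq_high_iff[OF \<Delta>_pos] update_weight_pos[of i] by simp
  moreover have "\<rho> * deg i * q k i \<le> \<rho> * deg i * (a + \<Delta>)"
    using \<rho>_pos quant_le[OF \<Delta>_pos] by (intro mult_left_mono) auto
  moreover have "\<rho> * (\<Sum>j\<in>N i. q k j) \<le> \<rho> * (deg i * (a + \<Delta>))"
    using \<rho>_pos sum_quant_nbrs_le by (intro mult_left_mono) auto
  ultimately show ?thesis
    unfolding x_Suc by (simp add: algebra_simps)
qed

lemma \<alpha>_Suc_ge: "\<alpha> k i - \<rho> * deg i * \<Delta> \<le> \<alpha> (Suc k) i"
proof -
  have "\<rho> * (deg i * a - deg i * (a + \<Delta>)) \<le> \<rho> * (deg i * q (Suc k) i - (\<Sum>j\<in>N i. q (Suc k) j))"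
    using \<rho>_pos sum_quant_nbrs_le[where i = i] quant_ge[OF \<Delta>_pos, of a \<delta> "x (Suc k) i"]
    by (intro mult_left_mono) (auto intro!: diff_mono mult_left_mono)
  then show ?thesis
    unfolding \<alpha>_Suc by (simp add: algebra_simps)
qed

lemma \<alpha>_Suc_le: "\<alpha> (Suc k) i \<le> \<alpha> k i + \<rho> * deg i * \<Delta>"
proof -
  have "\<rho> * (deg i * q (Suc k) i - (\<Sum>j\<in>N i. q (Suc k) j)) \<le> \<rho> * (deg i * (a + \<Delta>) - deg i * a)"
    using \<rho>_pos sum_quant_nbrs_ge[where i = i] quant_le[OF \<Delta>_pos, of a \<delta> "x (Suc k) i"]
    by (intro mult_left_mono) (auto intro!: diff_mono mult_left_mono)
  then show ?thesis
    unfolding \<alpha>_Suc by (simp add: algebra_simps)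
qed

lemma \<alpha>_increases_below_low: "\<alpha> k i < \<alpha>_low i \<Longrightarrow> \<alpha> k i \<le> \<alpha> (Suc k) i"
  using \<alpha>_low_le_if_next_low[of k i] quant_cases[of a \<Delta> \<delta> "x (Suc k) i"] sum_quant_nbrs_le[where i = i]
    \<rho>_pos
  by (auto simp: \<alpha>_Suc)

lemma \<alpha>_decreases_above_high: "\<alpha>_high i < \<alpha> k i \<Longrightarrow> \<alpha> (Suc k) i \<le> \<alpha> k i"
  using \<alpha>_less_high_if_next_high[of k i] quant_cases[of a \<Delta> \<delta> "x (Suc k) i"] sum_quant_nbrs_ge[where i = i]
    \<rho>_pos
  by (fastforce simp: \<alpha>_Suc mult_le_0_iff)

lemma \<alpha>_lower_bound_persists:
  assumes "c \<le> \<alpha>_low i" and "c - \<rho> * deg i * \<Delta> \<le> \<alpha> t i" and "t \<le> s"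
  shows "c - \<rho> * deg i * \<Delta> \<le> \<alpha> s i"
  using assms(3,2)
proof (induction s rule: dec_induct)
  case (step s)
  then show ?case
    using assms(1) \<alpha>_increases_below_low[of s i] \<alpha>_Suc_ge[of s i] by linarith
qed

lemma \<alpha>_upper_bound_persists:
  assumes "\<alpha>_high i \<le> c" and "\<alpha> t i \<le> c + \<rho> * deg i * \<Delta>" and "t \<le> s"
  shows "\<alpha> s i \<le> c + \<rho> * deg i * \<Delta>"
  using assms(3,2)
proof (induction s rule: dec_induct)
  case (step s)
  then show ?case
    using assms(1) \<alpha>_decreases_above_high[of i s] \<alpha>_Suc_le[of s i] by linarith
qed

lemma \<alpha>_bounded: "\<bar>\<alpha> k i\<bar> \<le> \<bar>\<alpha>_low i\<bar> + \<bar>\<alpha>_high i\<bar> + \<rho> * deg i * \<Delta>"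
proof -
  have slack: "0 \<le> \<rho> * deg i * \<Delta>"
    using \<rho>_pos \<Delta>_pos by simp
  have "min 0 (\<alpha>_low i) - \<rho> * deg i * \<Delta> \<le> \<alpha> k i"
    by (rule \<alpha>_lower_bound_persists[of _ _ 0]) (use slack in \<open>auto simp: bq_cadmm.simps\<close>)
  moreover have "\<alpha> k i \<le> max 0 (\<alpha>_high i) + \<rho> * deg i * \<Delta>"
    by (rule \<alpha>_upper_bound_persists[of _ _ 0]) (use slack in \<open>auto simp: bq_cadmm.simps\<close>)
  ultimately show ?thesis
    using slack by (rule abs_le_of_min_max_bounds)
qed

definition state :: "nat \<Rightarrow> nat \<Rightarrow> real \<times> real" where
  "state k = (\<lambda>i\<in>V. (q k i, \<alpha> k i))"

lemma state_eq_iff: "state k = state l \<longleftrightarrow> (\<forall>i\<in>V. q k i = q l i \<and> \<alpha> k i = \<alpha> l i)"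
  by (auto simp: state_def restrict_def fun_eq_iff)

lemma x_Suc_eq_if_state_eq:
  assumes "state k = state l" and "i \<in> V"
  shows "x (Suc k) i = x (Suc l) i"
proof -
  have same: "\<forall>j\<in>V. q k j = q l j \<and> \<alpha> k j = \<alpha> l j"
    using assms(1) state_eq_iff by blast
  then have "(\<Sum>j\<in>N i. q k j) = (\<Sum>j\<in>N i. q l j)"
    by (intro sum.cong refl) (metis nbrs_subset_nodes subsetD)
  then have "(1 + 2 * \<rho> * deg i) * x (Suc k) i = (1 + 2 * \<rho> * deg i) * x (Suc l) i"
    unfolding x_Suc using same assms(2) by simp
  then show ?thesis
    using update_weight_pos[of i] by simp
qed

lemma state_Suc_eq_if_state_eq:
  assumes "state k = state l"
  shows "state (Suc k) = state (Suc l)"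
proof -
  have "q (Suc k) i = q (Suc l) i \<and> \<alpha> (Suc k) i = \<alpha> (Suc l) i" if "i \<in> V" for i
  proof -
    have "(\<Sum>j\<in>N i. q (Suc k) j) = (\<Sum>j\<in>N i. q (Suc l) j)"
      using x_Suc_eq_if_state_eq[OF assms] by (intro sum.cong refl) (metis nbrs_subset_nodes subsetD)
    then show ?thesis
      using assms that x_Suc_eq_if_state_eq[OF assms that] by (simp add: \<alpha>_Suc state_eq_iff)
  qed
  then show ?thesis
    by (simp add: state_eq_iff)
qed

lemma finite_range_state: "finite (range state)"
proof -
  define C where "C = (\<Sum>i\<in>V. \<bar>\<alpha>_low i\<bar> + \<bar>\<alpha>_high i\<bar> + \<rho> * deg i * \<Delta>)"
  define B where "B = \<lceil>C / (\<rho> * \<Delta>)\<rceil>"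
  define L where "L = (\<lambda>z. \<rho> * \<Delta> * of_int z) ` {-B..B}"
  have \<alpha>_in_L: "\<alpha> k i \<in> L" if "i \<in> V" for k i
  proof -
    obtain z where z: "\<alpha> k i = \<rho> * \<Delta> * of_int z"
      using \<alpha>_in_lattice by blast
    have "\<bar>\<alpha> k i\<bar> \<le> \<bar>\<alpha>_low i\<bar> + \<bar>\<alpha>_high i\<bar> + \<rho> * deg i * \<Delta>"
      by (rule \<alpha>_bounded)
    also have "\<dots> \<le> C"
      unfolding C_def using that \<rho>_pos \<Delta>_pos by (intro member_le_sum) auto
    finally have "\<bar>\<alpha> k i\<bar> \<le> C" .
    then have "\<bar>of_int z\<bar> \<le> C / (\<rho> * \<Delta>)"
      using z \<rho>_pos \<Delta>_pos by (simp add: abs_mult field_simps)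
    then have "\<bar>z\<bar> \<le> B"
      unfolding B_def by linarith
    then show ?thesis
      unfolding L_def using z by (auto simp: abs_le_iff)
  qed
  have "range state \<subseteq> (\<Pi>\<^sub>E i\<in>V. {a, a + \<Delta>} \<times> L)"
    using quant_cases[of a \<Delta> \<delta>] \<alpha>_in_L by (auto simp: state_def restrict_PiE_iff)
  moreover have "finite (\<Pi>\<^sub>E i\<in>V. {a, a + \<Delta>} \<times> L)"
    by (intro finite_PiE) (auto simp: L_def)
  ultimately show ?thesis
    by (rule finite_subset)
qed

lemma state_eventually_periodic:
  obtains k0 P where "2 \<le> P" and "\<And>k. k0 \<le> k \<Longrightarrow> state (k + P) = state k"
proof -
  obtain k0 T where "0 < T" and period: "\<And>k. k0 \<le> k \<Longrightarrow> state (k + T) = state k"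
    using eventually_periodic[OF finite_range_state state_Suc_eq_if_state_eq] by blast
  show ?thesis
  proof (rule that)
    show "2 \<le> 2 * T"
      using \<open>0 < T\<close> by simp
    show "state (k + 2 * T) = state k" if "k0 \<le> k" for k
      using periodic_add_mult[where s = state, OF period that] .
  qed
qed

lemma \<alpha>_add:
  "\<alpha> (k + P) i = \<alpha> k i + \<rho> * (deg i * (\<Sum>l<P. q (Suc (k + l)) i) - (\<Sum>j\<in>N i. \<Sum>l<P. q (Suc (k + l)) j))"
proof (induction P)
  case (Suc P)
  have "\<alpha> (k + Suc P) i = \<alpha> (k + P) i + \<rho> * (deg i * q (Suc (k + P)) i - (\<Sum>j\<in>N i. q (Suc (k + P)) j))"
    using \<alpha>_Suc[of "k + P" i] by simp
  then show ?case
    using Suc by (simp add: sum.distrib algebra_simps)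
qed simp

lemma window_sums_equal:
  assumes "\<forall>i\<in>V. \<alpha> (k + P) i = \<alpha> k i" and "i \<in> V" and "j \<in> V"
  shows "(\<Sum>l<P. q (Suc (k + l)) i) = (\<Sum>l<P. q (Suc (k + l)) j)"
proof (rule laplacian_kernel_constant[OF graph _ assms(2,3)])
  fix i assume "i \<in> V"
  then have "\<rho> * (deg i * (\<Sum>l<P. q (Suc (k + l)) i) - (\<Sum>j\<in>N i. \<Sum>l<P. q (Suc (k + l)) j)) = 0"
    using \<alpha>_add[of k P i] assms(1) by simp
  then show "deg i * (\<Sum>l<P. q (Suc (k + l)) i) = (\<Sum>j\<in>N i. \<Sum>l<P. q (Suc (k + l)) j)"
    using \<rho>_pos by simp
qed

definition window_constant :: "nat \<Rightarrow> nat \<Rightarrow> nat \<Rightarrow> real \<Rightarrow> bool" where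
  "window_constant k0 P i c \<longleftrightarrow> (\<forall>l<P. q (Suc (k0 + l)) i = c)"

lemma window_constant_spreads:
  assumes "\<forall>i\<in>V. \<alpha> (k + P) i = \<alpha> k i" and "i0 \<in> V" and "c \<in> {a, a + \<Delta>}"
    and "window_constant k P i0 c" and "j \<in> V" and "l < P"
  shows "q (Suc (k + l)) j = c"
proof (rule sum_eq_const_imp_eq[where g = "\<lambda>l. q (Suc (k + l)) j" and A = "{..<P}"])
  show "(\<forall>l\<in>{..<P}. q (Suc (k + l)) j \<le> c) \<or> (\<forall>l\<in>{..<P}. c \<le> q (Suc (k + l)) j)"
    using assms(3) quant_le[OF \<Delta>_pos] quant_ge[OF \<Delta>_pos] by auto
  have "(\<Sum>l<P. q (Suc (k + l)) j) = (\<Sum>l<P. q (Suc (k + l)) i0)"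
    using window_sums_equal[OF assms(1) assms(5,2)] .
  also have "\<dots> = (\<Sum>l<P. c)"
    using assms(4) by (simp add: window_constant_def)
  finally show "(\<Sum>l<P. q (Suc (k + l)) j) = (\<Sum>l<P. c)" .
qed (use assms(6) in auto)

lemma q_in_window_if_periodic:
  assumes period: "\<And>k. k0 \<le> k \<Longrightarrow> state (k + P) = state k" and "0 < P" and "Suc k0 \<le> k"
    and "i \<in> V"
  obtains l where "l < P" and "q k i = q (Suc (k0 + l)) i"
proof (rule that)
  show "(k - Suc k0) mod P < P"
    using \<open>0 < P\<close> by simp
  have "state k = state (Suc k0 + (k - Suc k0) mod P)"
    using period assms(3) by (intro periodic_mod) auto
  then show "q k i = q (Suc (k0 + (k - Suc k0) mod P)) i"
    using assms(4) by (simp add: state_eq_iff)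
qed

lemma sum_update_weights: "(\<Sum>i\<in>V. 1 + 2 * \<rho> * deg i) = real n + 4 * \<rho> * real m"
proof -
  have "(\<Sum>i\<in>V. 1 + 2 * \<rho> * deg i) = real n + 2 * \<rho> * (\<Sum>i\<in>V. deg i)"
    by (simp add: sum.distrib sum_distrib_left)
  then show ?thesis
    using sum_deg by simp
qed

lemma n_mult_rbar: "real n * rbar = (\<Sum>i\<in>V. r i)"
  using two_le_n by simp

lemma sum_weighted_x_Suc_consensus:
  assumes "\<forall>i\<in>V. q k i = c"
  shows "(\<Sum>i\<in>V. (1 + 2 * \<rho> * deg i) * x (Suc k) i) = (\<Sum>i\<in>V. r i) + 4 * \<rho> * real m * c"
proof -
  have "(\<Sum>i\<in>V. deg i * q k i) = (\<Sum>i\<in>V. deg i * c)"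
    using assms by (intro sum.cong) auto
  also have "\<dots> = 2 * real m * c"
    using sum_deg by (simp add: sum_distrib_right[symmetric])
  finally show ?thesis
    unfolding sum_weighted_x_Suc by simp
qed

lemma nodes_nonempty: "V \<noteq> {}"
  using two_le_n by (auto simp: nodes_def)

lemma mult_bound_factor: "real n * ((1 + 4 * \<rho> * real m / real n) * w) = (real n + 4 * \<rho> * real m) * w"
  using two_le_n by (simp add: field_simps)

lemma consensus_low_bound:
  assumes "\<forall>i\<in>V. q k i = a" and "\<forall>i\<in>V. q (Suc k) i = a"
  shows "\<bar>a - proj a \<Delta> rbar\<bar> \<le> (1 + 4 * \<rho> * real m / real n) * (\<Delta> - \<delta>)"
proof -
  have "(\<Sum>i\<in>V. (1 + 2 * \<rho> * deg i) * x (Suc k) i) \<le> (\<Sum>i\<in>V. (1 + 2 * \<rho> * deg i) * thr)"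
    using assms(2) quant_eq_low_iff[OF \<Delta>_pos] update_weight_pos
    by (intro sum_mono mult_left_mono) (auto intro: less_imp_le)
  then have "(\<Sum>i\<in>V. r i) + 4 * \<rho> * real m * a \<le> (real n + 4 * \<rho> * real m) * thr"
    using sum_weighted_x_Suc_consensus[OF assms(1)] sum_update_weights
    by (simp add: sum_distrib_right[symmetric])
  then have "real n * (rbar - a) \<le> real n * ((1 + 4 * \<rho> * real m / real n) * (\<Delta> - \<delta>))"
    unfolding mult_bound_factor right_diff_distrib n_mult_rbar by (simp add: algebra_simps)
  then have "rbar - a \<le> (1 + 4 * \<rho> * real m / real n) * (\<Delta> - \<delta>)"
    using two_le_n by simp
  moreover have "0 \<le> (1 + 4 * \<rho> * real m / real n) * (\<Delta> - \<delta>)"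
    using \<rho>_pos \<delta>_less_\<Delta> by simp
  ultimately show ?thesis
    using dist_low_proj[OF \<Delta>_pos, of a rbar] by linarith
qed

lemma consensus_high_bound:
  assumes "\<forall>i\<in>V. q k i = a + \<Delta>" and "\<forall>i\<in>V. q (Suc k) i = a + \<Delta>"
  shows "\<bar>a + \<Delta> - proj a \<Delta> rbar\<bar> < (1 + 4 * \<rho> * real m / real n) * \<delta>"
proof -
  have "(\<Sum>i\<in>V. (1 + 2 * \<rho> * deg i) * thr) < (\<Sum>i\<in>V. (1 + 2 * \<rho> * deg i) * x (Suc k) i)"
    using assms(2) quant_eq_high_iff[OF \<Delta>_pos] update_weight_pos nodes_nonempty
    by (intro sum_strict_mono mult_strict_left_mono) auto
  then have "(real n + 4 * \<rho> * real m) * thr < (\<Sum>i\<in>V. r i) + 4 * \<rho> * real m * (a + \<Delta>)"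
    using sum_weighted_x_Suc_consensus[OF assms(1)] sum_update_weights
    by (simp add: sum_distrib_right[symmetric])
  then have "real n * (a + \<Delta> - rbar) < real n * ((1 + 4 * \<rho> * real m / real n) * \<delta>)"
    unfolding mult_bound_factor right_diff_distrib n_mult_rbar by (simp add: algebra_simps)
  then have "a + \<Delta> - rbar < (1 + 4 * \<rho> * real m / real n) * \<delta>"
    using two_le_n by simp
  moreover have "0 < (1 + 4 * \<rho> * real m / real n) * \<delta>"
    using \<rho>_pos \<delta>_pos by (simp add: add_pos_nonneg)
  ultimately show ?thesis
    using dist_high_proj[OF \<Delta>_pos, of a rbar] by linarith
qed

lemma sum_\<alpha>_low:
  "(\<Sum>i\<in>V. \<alpha>_low i - \<rho> * deg i * \<Delta>) = real n * (rbar - thr) - \<rho> * (3 * \<Delta> - 2 * \<delta>) * (\<Sum>i\<in>V. deg i)"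
proof -
  have "(\<Sum>i\<in>V. \<alpha>_low i - \<rho> * deg i * \<Delta>) = (\<Sum>i\<in>V. r i - thr - \<rho> * (3 * \<Delta> - 2 * \<delta>) * deg i)"
    by (rule sum.cong) (simp_all add: algebra_simps)
  also have "\<dots> = (\<Sum>i\<in>V. r i) - real n * thr - \<rho> * (3 * \<Delta> - 2 * \<delta>) * (\<Sum>i\<in>V. deg i)"
    by (simp add: sum_subtractf sum_distrib_left)
  finally show ?thesis
    using n_mult_rbar by (simp add: right_diff_distrib)
qed

lemma sum_\<alpha>_high:
  "(\<Sum>i\<in>V. \<alpha>_high i + \<rho> * deg i * \<Delta>) = real n * (rbar - thr) + \<rho> * (\<Delta> + 2 * \<delta>) * (\<Sum>i\<in>V. deg i)"
proof -
  have "(\<Sum>i\<in>V. \<alpha>_high i + \<rho> * deg i * \<Delta>) = (\<Sum>i\<in>V. r i - thr + \<rho> * (\<Delta> + 2 * \<delta>) * deg i)"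
    by (rule sum.cong) (simp_all add: algebra_simps)
  also have "\<dots> = (\<Sum>i\<in>V. r i) - real n * thr + \<rho> * (\<Delta> + 2 * \<delta>) * (\<Sum>i\<in>V. deg i)"
    by (simp add: sum.distrib sum_subtractf sum_distrib_left)
  finally show ?thesis
    using n_mult_rbar by (simp add: right_diff_distrib)
qed

lemma \<alpha>_lower_bound_after_low:
  assumes "t \<le> s" and "q (Suc t) i = a"
  shows "\<alpha>_low i - \<rho> * deg i * \<Delta> \<le> \<alpha> s i"
proof -
  have "0 \<le> \<rho> * deg i * \<Delta>"
    using \<rho>_pos \<Delta>_pos by simp
  then show ?thesis
    using \<alpha>_lower_bound_persists[where c = "\<alpha>_low i" and i = i and t = t and s = s]
      \<alpha>_low_le_if_next_low[OF assms(2)] assms(1) by linarith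
qed

lemma \<alpha>_upper_bound_after_high:
  assumes "t \<le> s" and "q (Suc t) i = a + \<Delta>"
  shows "\<alpha> s i \<le> \<alpha>_high i + \<rho> * deg i * \<Delta>"
proof -
  have "0 \<le> \<rho> * deg i * \<Delta>"
    using \<rho>_pos \<Delta>_pos by simp
  then show ?thesis
    using \<alpha>_upper_bound_persists[where c = "\<alpha>_high i" and i = i and t = t and s = s]
      \<alpha>_less_high_if_next_high[OF assms(2)] assms(1) by linarith
qed

lemma sum_deg_scaled_le:
  assumes "0 \<le> c" and "c \<le> 3 * \<Delta>"
  shows "\<rho> * c * (\<Sum>i\<in>V. deg i) \<le> real n * (3 * \<rho> * real n * \<Delta>)"
proof -
  have "\<rho> * c \<le> 3 * \<rho> * \<Delta>"
    using assms(2) \<rho>_pos by simp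
  then have "\<rho> * c * (\<Sum>i\<in>V. deg i) \<le> (3 * \<rho> * \<Delta>) * (real n * real n)"
    using mult_mono[OF _ sum_deg_le] assms(1) \<rho>_pos \<Delta>_pos by (simp add: sum_nonneg)
  then show ?thesis
    by (simp add: algebra_simps)
qed

lemma cycling_bound:
  assumes low: "\<forall>i\<in>V. \<exists>t\<le>s. q (Suc t) i = a" and high: "\<forall>i\<in>V. \<exists>t\<le>s. q (Suc t) i = a + \<Delta>"
  shows "\<bar>rbar - thr\<bar> < 6 * \<rho> * real n * \<Delta>"
proof -
  have "\<alpha>_low i - \<rho> * deg i * \<Delta> \<le> \<alpha> s i" if "i \<in> V" for i
    using bspec[OF low that] by (auto intro: \<alpha>_lower_bound_after_low)
  then have "(\<Sum>i\<in>V. \<alpha>_low i - \<rho> * deg i * \<Delta>) \<le> 0"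
    using sum_mono[of V "\<lambda>i. \<alpha>_low i - \<rho> * deg i * \<Delta>" "\<alpha> s"] sum_\<alpha>_eq_0[of s] by simp
  then have "real n * (rbar - thr) \<le> \<rho> * (3 * \<Delta> - 2 * \<delta>) * (\<Sum>i\<in>V. deg i)"
    unfolding sum_\<alpha>_low by simp
  also have "\<dots> \<le> real n * (3 * \<rho> * real n * \<Delta>)"
    using \<delta>_pos \<delta>_less_\<Delta> by (intro sum_deg_scaled_le) auto
  finally have above: "rbar - thr \<le> 3 * \<rho> * real n * \<Delta>"
    using two_le_n by simp
  have "\<alpha> s i \<le> \<alpha>_high i + \<rho> * deg i * \<Delta>" if "i \<in> V" for i
    using bspec[OF high that] by (auto intro: \<alpha>_upper_bound_after_high)
  then have "0 \<le> (\<Sum>i\<in>V. \<alpha>_high i + \<rho> * deg i * \<Delta>)"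
    using sum_mono[of V "\<alpha> s" "\<lambda>i. \<alpha>_high i + \<rho> * deg i * \<Delta>"] sum_\<alpha>_eq_0[of s] by simp
  then have "real n * (thr - rbar) \<le> \<rho> * (\<Delta> + 2 * \<delta>) * (\<Sum>i\<in>V. deg i)"
    unfolding sum_\<alpha>_high by (simp add: algebra_simps)
  also have "\<dots> \<le> real n * (3 * \<rho> * real n * \<Delta>)"
    using \<delta>_pos \<delta>_less_\<Delta> by (intro sum_deg_scaled_le) auto
  finally have below: "thr - rbar \<le> 3 * \<rho> * real n * \<Delta>"
    using two_le_n by simp
  have "0 < 3 * \<rho> * real n * \<Delta>"
    using \<rho>_pos \<Delta>_pos two_le_n by simp
  moreover have "6 * \<rho> * real n * \<Delta> = 2 * (3 * \<rho> * real n * \<Delta>)"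
    by simp
  ultimately show ?thesis
    using above below unfolding abs_less_iff by linarith
qed

lemma converges_if_window_constant:
  assumes period: "\<And>k. k0 \<le> k \<Longrightarrow> state (k + P) = state k" and "0 < P"
    and "i0 \<in> V" and "c \<in> {a, a + \<Delta>}" and "window_constant k0 P i0 c"
  shows "\<exists>xQ \<in> {a, a + \<Delta>}.
      (\<forall>k\<ge>Suc k0. \<forall>i\<in>V. q k i = xQ) \<and>
      (xQ = a \<longrightarrow> \<bar>xQ - proj a \<Delta> rbar\<bar> \<le> (1 + 4 * \<rho> * real m / real n) * (\<Delta> - \<delta>)) \<and>
      (xQ = a + \<Delta> \<longrightarrow> \<bar>xQ - proj a \<Delta> rbar\<bar> < (1 + 4 * \<rho> * real m / real n) * \<delta>)"
proof -
  have \<alpha>_period: "\<forall>i\<in>V. \<alpha> (k0 + P) i = \<alpha> k0 i"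
    using period[of k0] by (simp add: state_eq_iff)
  have const: "\<forall>i\<in>V. q k i = c" if k: "Suc k0 \<le> k" for k
  proof
    fix i assume iV: "i \<in> V"
    obtain l where "l < P" and "q k i = q (Suc (k0 + l)) i"
      using q_in_window_if_periodic[OF period \<open>0 < P\<close> k iV] .
    then show "q k i = c"
      using window_constant_spreads[OF \<alpha>_period assms(3-5) iV] by simp
  qed
  have "c = a \<longrightarrow> \<bar>c - proj a \<Delta> rbar\<bar> \<le> (1 + 4 * \<rho> * real m / real n) * (\<Delta> - \<delta>)"
    using consensus_low_bound[of "Suc k0"] const by simp
  moreover have "c = a + \<Delta> \<longrightarrow> \<bar>c - proj a \<Delta> rbar\<bar> < (1 + 4 * \<rho> * real m / real n) * \<delta>"
    using consensus_high_bound[of "Suc k0"] const by simp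
  ultimately show ?thesis
    using assms(4) const by (intro bexI[of _ c]) simp_all
qed

lemma hits_low_if_not_window_constant_high:
  assumes "\<not> window_constant k0 P i (a + \<Delta>)"
  shows "\<exists>t\<le>k0 + P. q (Suc t) i = a"
proof -
  obtain l where "l < P" and "q (Suc (k0 + l)) i \<noteq> a + \<Delta>"
    using assms unfolding window_constant_def by auto
  then have "q (Suc (k0 + l)) i = a"
    using quant_cases[of a \<Delta> \<delta> "x (Suc (k0 + l)) i"] by simp
  then show ?thesis
    using \<open>l < P\<close> by (intro exI[of _ "k0 + l"]) simp
qed

lemma hits_high_if_not_window_constant_low:
  assumes "\<not> window_constant k0 P i a"
  shows "\<exists>t\<le>k0 + P. q (Suc t) i = a + \<Delta>"
proof -
  obtain l where "l < P" and "q (Suc (k0 + l)) i \<noteq> a"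
    using assms unfolding window_constant_def by auto
  then have "q (Suc (k0 + l)) i = a + \<Delta>"
    using quant_cases[of a \<Delta> \<delta> "x (Suc (k0 + l)) i"] by simp
  then show ?thesis
    using \<open>l < P\<close> by (intro exI[of _ "k0 + l"]) simp
qed

lemma cycles_if_no_window_constant:
  assumes period: "\<And>k. k0 \<le> k \<Longrightarrow> state (k + P) = state k" and "2 \<le> P"
    and mixed: "\<forall>i\<in>V. \<forall>c\<in>{a, a + \<Delta>}. \<not> window_constant k0 P i c"
  shows "\<exists>T::nat. T \<ge> 2 \<and>
      (\<forall>k\<ge>Suc k0. (\<forall>i\<in>V. x k i = x (k + T) i) \<and>
         (\<forall>i\<in>V. \<forall>j\<in>V. (\<Sum>l<T. q (k + l) i) = (\<Sum>l<T. q (k + l) j))) \<and>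
      \<bar>rbar - thr\<bar> < 6 * \<rho> * real n * \<Delta>"
proof -
  have periodic: "\<forall>k\<ge>Suc k0. (\<forall>i\<in>V. x k i = x (k + P) i) \<and>
      (\<forall>i\<in>V. \<forall>j\<in>V. (\<Sum>l<P. q (k + l) i) = (\<Sum>l<P. q (k + l) j))"
  proof (intro allI impI)
    fix k assume "Suc k0 \<le> k"
    then obtain k' where k: "k = Suc k'" and "k0 \<le> k'"
      by (cases k) auto
    have same: "state (k' + P) = state k'"
      using period[OF \<open>k0 \<le> k'\<close>] .
    have "\<forall>i\<in>V. x k i = x (k + P) i"
    proof
      fix i assume "i \<in> V"
      show "x k i = x (k + P) i"
        using x_Suc_eq_if_state_eq[OF same \<open>i \<in> V\<close>] unfolding k by simp
    qed
    moreover have "\<forall>i\<in>V. \<forall>j\<in>V. (\<Sum>l<P. q (k + l) i) = (\<Sum>l<P. q (k + l) j)"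
    proof (intro ballI)
      fix i j assume "i \<in> V" "j \<in> V"
      have "\<forall>i\<in>V. \<alpha> (k' + P) i = \<alpha> k' i"
        using same by (simp add: state_eq_iff)
      from window_sums_equal[OF this \<open>i \<in> V\<close> \<open>j \<in> V\<close>]
      show "(\<Sum>l<P. q (k + l) i) = (\<Sum>l<P. q (k + l) j)"
        unfolding k by simp
    qed
    ultimately show "(\<forall>i\<in>V. x k i = x (k + P) i) \<and>
        (\<forall>i\<in>V. \<forall>j\<in>V. (\<Sum>l<P. q (k + l) i) = (\<Sum>l<P. q (k + l) j))"
      by (rule conjI)
  qed
  have "\<forall>i\<in>V. \<exists>t\<le>k0 + P. q (Suc t) i = a"
    using mixed by (simp add: hits_low_if_not_window_constant_high)
  moreover have "\<forall>i\<in>V. \<exists>t\<le>k0 + P. q (Suc t) i = a + \<Delta>"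
    using mixed by (simp add: hits_high_if_not_window_constant_low)
  ultimately have bound: "\<bar>rbar - thr\<bar> < 6 * \<rho> * real n * \<Delta>"
    by (rule cycling_bound)
  show ?thesis
    by (intro exI[of _ P] conjI assms(2) periodic bound)
qed

end

theorem theorem2:
  fixes n :: nat and E :: "nat \<Rightarrow> nat \<Rightarrow> bool"
    and a \<Delta> \<delta> \<rho> :: real and r :: "nat \<Rightarrow> real"
  assumes "n \<ge> 2"
    and "simple_connected_graph n E"
    and "\<Delta> > 0" and "0 < \<delta>" and "\<delta> < \<Delta>" and "\<rho> > 0"
  defines "rbar \<equiv> (\<Sum>i\<in>nodes n. r i) / real n"
    and "m \<equiv> num_edges n E"
    and "x \<equiv> xk a \<Delta> \<delta> \<rho> n E r"
    and "Q \<equiv> quant a \<Delta> \<delta>"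
  shows "\<exists>k0::nat.
     (\<exists>xQ \<in> {a, a + \<Delta>}.
        (\<forall>k\<ge>k0. \<forall>i\<in>nodes n. Q (x k i) = xQ) \<and>
        (xQ = a \<longrightarrow> \<bar>xQ - proj a \<Delta> rbar\<bar> \<le> (1 + 4 * \<rho> * real m / real n) * (\<Delta> - \<delta>)) \<and>
        (xQ = a + \<Delta> \<longrightarrow> \<bar>xQ - proj a \<Delta> rbar\<bar> < (1 + 4 * \<rho> * real m / real n) * \<delta>))
   \<or> (\<exists>T::nat. T \<ge> 2 \<and>
        (\<forall>k\<ge>k0. (\<forall>i\<in>nodes n. x k i = x (k + T) i) \<and>
           (\<forall>i\<in>nodes n. \<forall>j\<in>nodes n.
              (\<Sum>l<T. Q (x (k + l) i)) = (\<Sum>l<T. Q (x (k + l) j)))) \<and>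
        \<bar>rbar - (a + \<Delta> - \<delta>)\<bar> < 6 * \<rho> * real n * \<Delta>)"
proof -
  interpret bq_cadmm_run n E a \<Delta> \<delta> \<rho> r
    using assms(1-6) by unfold_locales
  obtain k0 P where "2 \<le> P" and period: "\<And>k. k0 \<le> k \<Longrightarrow> state (k + P) = state k"
    using state_eventually_periodic by blast
  have "0 < P"
    using \<open>2 \<le> P\<close> by simp
  show ?thesis
  proof (cases "\<exists>i0\<in>nodes n. \<exists>c\<in>{a, a + \<Delta>}. window_constant k0 P i0 c")
    case True
    then obtain i0 c where "i0 \<in> nodes n" and "c \<in> {a, a + \<Delta>}" and "window_constant k0 P i0 c"
      by blast
    note converges = converges_if_window_constant[OF period \<open>0 < P\<close> this]
    show ?thesis
      unfolding assms(7-10) by (intro exI[of _ "Suc k0"] disjI1 converges)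
  next
    case False
    then have "\<forall>i\<in>nodes n. \<forall>c\<in>{a, a + \<Delta>}. \<not> window_constant k0 P i c"
      by blast
    note cycles = cycles_if_no_window_constant[OF period \<open>2 \<le> P\<close> this]
    show ?thesis
      unfolding assms(7-10) by (intro exI[of _ "Suc k0"] disjI2 cycles)
  qed
qed

end
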